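(* On every nondegenerate TNECP instance (and for every choice of $j^\star\in[n]$), the tropical Lemke--Howson algorithm terminates after a finite number of iterations with a fully labeled tropical basis $B$ distinct from $[n]\times\{\text{blue}\}$.
   Context: $\mathbb{T}=\mathbb{R}\cup\{-\infty\}$ with $\oplus=\max$, $\odot=+$. A TNECP instance is $M\in\mathbb{T}^{n\times n}$, $q\in\mathbb{T}^n$ with no all-$(-\infty)$ column in $M$ and no $-\infty$ entry in $q$; it is nondegenerate if for each $j\in[n]$ the minimum $\min_k(q_k-M_{kj})$ is attained by exactly one $k$ (convention $a-(-\infty)=+\infty$). Write $w\oplus M\odot z=q$ as $A\odot x=q$ with columns indexed by $[n]\uplus[n]:=([n]\times\{\text{blue}\})\cup([n]\times\{\text{red}\})$: column $(i,\text{blue})$ has $0$ in row $i$ and $-\infty$ elsewhere; column $(j,\text{red})$ is column $j$ of $M$. A tropical basis of $A\odot x=b$ ($A\in\mathbb{T}^{n\times d}$) is a set $B$ of $n$ column indices with a bijection $\phi:[n]\to B$ such that for each $i$, $b_i-A_{i\phi(i)}\in\mathbb{T}$ is minimal among $b_k-A_{k\phi(i)}$, $k\in[n]$. The label of $(k,c)$ is $k$; $(k,\text{blue})$ and $(k,\text{red})$ are twins; a basis is fully labeled if every label of $[n]$ appears in it. Tropical Lemke--Howson algorithm with parameter $j^\star\in[n]$: $B\leftarrow[n]\times\{\text{blue}\}$, $\gamma\leftarrow(j^\star,\text{red})$; loop: $B'\leftarrow$ the unique tropical basis contained in $B\cup\{\gamma\}$ and different from $B$; $\gamma\leftarrow$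 twin of the unique element of $B\setminus B'$; $B\leftarrow B'$; if $B$ is fully labeled, stop. *)

theory Defs
  imports "HOL-Library.Extended_Real"
begin

text \<open>Tropical numbers T = R \<union> {-\<infinity>} are modelled as ereal values different from +\<infinity>.
  Indices [n] are {0..<n}.\<close>

datatype color = Blue | Red

type_synonym col = "nat \<times> color"

definition tnecp_instance :: "nat \<Rightarrow> (nat \<Rightarrow> nat \<Rightarrow> ereal) \<Rightarrow> (nat \<Rightarrow> real) \<Rightarrow> bool" where
  "tnecp_instance n M q \<longleftrightarrow>
     (\<forall>k<n. \<forall>j<n. M k j \<noteq> \<infinity>) \<and> (\<forall>j<n. \<exists>k<n. M k j \<noteq> -\<infinity>)"

text \<open>q has real (finite) entries by its type. Note ereal (q k) - (-\<infinity>) = \<infinity>.\<close>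

definition nondegenerate :: "nat \<Rightarrow> (nat \<Rightarrow> nat \<Rightarrow> ereal) \<Rightarrow> (nat \<Rightarrow> real) \<Rightarrow> bool" where
  "nondegenerate n M q \<longleftrightarrow>
     (\<forall>j<n. \<exists>!k. k < n \<and> (\<forall>k'<n. ereal (q k) - M k j \<le> ereal (q k') - M k' j))"

text \<open>Entry of the matrix A = [I | M] in row k and column c.\<close>
fun colA :: "(nat \<Rightarrow> nat \<Rightarrow> ereal) \<Rightarrow> col \<Rightarrow> nat \<Rightarrow> ereal" where
  "colA M (i, Blue) k = (if k = i then 0 else -\<infinity>)"
| "colA M (j, Red) k = M k j"

definition tropical_basis :: "nat \<Rightarrow> (nat \<Rightarrow> nat \<Rightarrow> ereal) \<Rightarrow> (nat \<Rightarrow> real) \<Rightarrow> col set \<Rightarrow> bool" where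
  "tropical_basis n M q B \<longleftrightarrow>
     B \<subseteq> {0..<n} \<times> UNIV \<and>
     (\<exists>\<phi>. bij_betw \<phi> {0..<n} B \<and>
        (\<forall>i<n. ereal (q i) - colA M (\<phi> i) i \<noteq> \<infinity> \<and>
               (\<forall>k<n. ereal (q i) - colA M (\<phi> i) i \<le> ereal (q k) - colA M (\<phi> i) k)))"

definition label :: "col \<Rightarrow> nat" where "label c = fst c"

fun twin :: "col \<Rightarrow> col" where
  "twin (k, Blue) = (k, Red)"
| "twin (k, Red) = (k, Blue)"

definition fully_labeled :: "nat \<Rightarrow> col set \<Rightarrow> bool" where
  "fully_labeled n B \<longleftrightarrow> {0..<n} \<subseteq> label ` B"

definition all_blue :: "nat \<Rightarrow> col set" where
  "all_blue n = {0..<n} \<times> {Blue}"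

definition lh_step :: "nat \<Rightarrow> (nat \<Rightarrow> nat \<Rightarrow> ereal) \<Rightarrow> (nat \<Rightarrow> real) \<Rightarrow>
    col set \<times> col \<Rightarrow> col set \<times> col \<Rightarrow> bool" where
  "lh_step n M q s s' \<longleftrightarrow>
     (let B = fst s; \<gamma> = snd s; B' = fst s'; \<gamma>' = snd s' in
       (\<exists>!C. tropical_basis n M q C \<and> C \<subseteq> insert \<gamma> B \<and> C \<noteq> B) \<and>
       tropical_basis n M q B' \<and> B' \<subseteq> insert \<gamma> B \<and> B' \<noteq> B \<and>
       (\<exists>e. B - B' = {e} \<and> \<gamma>' = twin e))"

end

theory Submission
  imports Defs
begin

(* By nondegeneracy each column c of [I | M] has a unique row min_row c attaining
   min_k (q_k - A_kc); tropical bases are exactly the column sets on which min_row is a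
   bijection onto [n], so the pivot is forced: the entering column replaces the basis column
   with the same min_row.  On states (B, gamma) the pivot is an involution (the leaving column
   re-enters and gamma leaves), and a step is this involution followed by the fixed-point-free
   involution that swaps the entering column for its twin; hence steps are injective.  While
   jstar is the only label doubled among B and gamma, the run therefore cannot cycle, and by
   finiteness it reaches a fully labeled basis.  That basis is not the all-blue one: otherwise
   the run would be a palindrome under the pivot involution, and its middle a fixed point of
   one of the two involutions. *)

lemma twin_neq [simp]: "twin c \<noteq> c"
  by (cases c rule: twin.cases) auto

lemma twin_twin [simp]: "twin (twin c) = c"
  by (cases c rule: twin.cases) auto

lemma label_pair [simp]: "label (i, c) = i"
  by (simp add: label_def)

lemma label_twin [simp]: "label (twin c) = label c"
  by (cases c rule: twin.cases) auto

lemma bij_betw_exchange: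
  assumes "bij_betw f A C" and "a \<in> A" and "f b = f a"
  shows "bij_betw f (insert b (A - {a})) C"
  using assms unfolding bij_betw_def inj_on_def by (auto simp: image_iff)

lemma funpow_inj_on_finite_returns:
  assumes "finite V" and inj: "inj_on f V" and orbit: "\<And>t. (f ^^ t) x \<in> V"
  obtains t where "t > 0" and "(f ^^ t) x = x"
proof -
  have cancel: "(f ^^ (b - a)) x = x" if "(f ^^ a) x = (f ^^ b) x" and "a \<le> b" for a b
    using that
  proof (induction a arbitrary: b)
    case (Suc a)
    then obtain b' where b: "b = Suc b'" "a \<le> b'"
      by (cases b) auto
    have "f ((f ^^ a) x) = f ((f ^^ b') x)"
      using Suc.prems b by simp
    then have "(f ^^ a) x = (f ^^ b') x"
      using inj_onD[OF inj] orbit by blast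
    then show ?case
      using Suc.IH b by simp
  qed simp
  have "range (\<lambda>t. (f ^^ t) x) \<subseteq> V"
    using orbit by blast
  then have "\<not> inj (\<lambda>t. (f ^^ t) x)"
    using finite_subset[OF _ assms(1)] finite_imageD infinite_UNIV_nat by blast
  then obtain a b where "a < b" and "(f ^^ a) x = (f ^^ b) x"
    unfolding inj_def by (metis linorder_neqE_nat)
  with cancel show thesis
    by (intro that[of "b - a"]) auto
qed

(* If R (s p) = s 0, then R (s (p - t)) = s t for all t, and the middle of this palindrome
   is a fixed point of R or of tau. *)
lemma reversible_walk_not_closed:
  fixes R \<tau> :: "'a \<Rightarrow> 'a"
  assumes step: "\<And>t. t < p \<Longrightarrow> s (Suc t) = \<tau> (R (s t))"
    and walk: "\<And>t. t \<le> p \<Longrightarrow> s t \<in> V"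
    and R_involution: "\<And>x. x \<in> V \<Longrightarrow> R (R x) = x"
    and R_no_fixpoint: "\<And>x. x \<in> V \<Longrightarrow> R x \<noteq> x"
    and \<tau>_involution: "\<And>x. \<tau> (\<tau> x) = x"
    and \<tau>_no_fixpoint: "\<And>x. \<tau> x \<noteq> x"
  shows "R (s p) \<noteq> s 0"
proof
  assume closed: "R (s p) = s 0"
  have mirror: "R (s (p - t)) = s t" if "t \<le> p" for t
    using that
  proof (induction t)
    case (Suc t)
    then have "s (p - t) = R (s t)"
      using R_involution walk by (metis Suc_leD diff_le_self)
    moreover have "p - t = Suc (p - Suc t)"
      using Suc.prems by simp
    ultimately have "s (Suc t) = \<tau> (\<tau> (R (s (p - Suc t))))"
      using step[of t] step[of "p - Suc t"] Suc.prems by simp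
    then show ?case
      using \<tau>_involution by simp
  qed (use closed in simp)
  show False
  proof (cases "even p")
    case True
    then obtain m where p: "p = 2 * m" ..
    then have "R (s m) = s m"
      using mirror[of m] by simp
    then show False
      using R_no_fixpoint walk p by simp
  next
    case False
    then obtain m where p: "p = Suc (2 * m)"
      using oddE by fastforce
    then have "R (s (Suc m)) = s m"
      using mirror[of m] by simp
    then have "s (Suc m) = R (s m)"
      using R_involution walk[of "Suc m"] p by force
    moreover have "s (Suc m) = \<tau> (R (s m))"
      using step p by simp
    ultimately show False
      using \<tau>_no_fixpoint by metis
  qed
qed

locale tnecp =
  fixes n :: nat and M :: "nat \<Rightarrow> nat \<Rightarrow> ereal" and q :: "nat \<Rightarrow> real"
  assumes inst: "tnecp_instance n M q" and nondeg: "nondegenerate n M q"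
begin

definition columns :: "col set" where
  "columns = {0..<n} \<times> UNIV"

lemma mem_columns [simp]: "(i, c) \<in> columns \<longleftrightarrow> i < n"
  by (simp add: columns_def)

lemma label_less_if_mem_columns: "c \<in> columns \<Longrightarrow> label c < n"
  by (cases c) simp

lemma finite_columns: "finite columns"
proof -
  have "(UNIV :: color set) = {Blue, Red}"
    using color.exhaust by auto
  then have "finite (UNIV :: color set)"
    by (metis finite.emptyI finite.insertI)
  then show ?thesis
    unfolding columns_def by simp
qed

definition is_min_row :: "nat \<Rightarrow> col \<Rightarrow> bool" where
  "is_min_row i c \<longleftrightarrow> ereal (q i) - colA M c i \<noteq> \<infinity> \<and>
     (\<forall>k<n. ereal (q i) - colA M c i \<le> ereal (q k) - colA M c k)"

lemma ex1_min_row_red: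
  assumes "j < n"
  shows "\<exists>!i. i < n \<and> is_min_row i (j, Red)"
proof -
  obtain k0 where k0: "k0 < n" "M k0 j \<noteq> -\<infinity>"
    using inst assms unfolding tnecp_instance_def by blast
  then have "ereal (q k0) - M k0 j \<noteq> \<infinity>"
    using inst assms unfolding tnecp_instance_def by (cases "M k0 j") auto
  then have "is_min_row i (j, Red) \<longleftrightarrow> (\<forall>k<n. ereal (q i) - M i j \<le> ereal (q k) - M k j)" for i
    using k0(1) unfolding is_min_row_def by fastforce
  then show ?thesis
    using nondeg assms unfolding nondegenerate_def by simp
qed

lemma ex1_min_row:
  assumes "c \<in> columns"
  shows "\<exists>!i. i < n \<and> is_min_row i c"
proof -
  obtain k cl where c: "c = (k, cl)"
    by (rule prod.exhaust)
  show ?thesis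
  proof (cases cl)
    case Blue
    then have "is_min_row i c \<longleftrightarrow> i = k" for i
      unfolding c by (auto simp: is_min_row_def)
    then show ?thesis
      using assms unfolding c by auto
  next
    case Red
    then show ?thesis
      using assms ex1_min_row_red unfolding c by simp
  qed
qed

definition min_row :: "col \<Rightarrow> nat" where
  "min_row c = (THE i. i < n \<and> is_min_row i c)"

lemma min_row: "c \<in> columns \<Longrightarrow> min_row c < n \<and> is_min_row (min_row c) c"
  unfolding min_row_def by (rule theI'[OF ex1_min_row])

lemma min_row_eqI: "c \<in> columns \<Longrightarrow> i < n \<Longrightarrow> is_min_row i c \<Longrightarrow> min_row c = i"
  using min_row ex1_min_row by blast

lemma min_row_blue: "i < n \<Longrightarrow> min_row (i, Blue) = i"
  by (rule min_row_eqI) (auto simp: is_min_row_def)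

lemma tropical_basis_iff:
  "tropical_basis n M q B \<longleftrightarrow> B \<subseteq> columns \<and> bij_betw min_row B {0..<n}"
proof -
  have "tropical_basis n M q B \<longleftrightarrow>
      B \<subseteq> columns \<and> (\<exists>\<phi>. bij_betw \<phi> {0..<n} B \<and> (\<forall>i<n. is_min_row i (\<phi> i)))"
    unfolding tropical_basis_def is_min_row_def columns_def ..
  also have "\<dots> \<longleftrightarrow> B \<subseteq> columns \<and> bij_betw min_row B {0..<n}"
  proof (intro conj_cong refl iffI)
    assume B: "B \<subseteq> columns"
    {
      assume "\<exists>\<phi>. bij_betw \<phi> {0..<n} B \<and> (\<forall>i<n. is_min_row i (\<phi> i))"
      then obtain \<phi> where \<phi>: "bij_betw \<phi> {0..<n} B" and min: "\<And>i. i < n \<Longrightarrow> is_min_row i (\<phi> i)"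
        by blast
      have "min_row (\<phi> i) = i" if "i < n" for i
      proof -
        have "\<phi> i \<in> B"
          using \<phi> that by (auto simp: bij_betw_def)
        then show ?thesis
          using min_row_eqI[OF _ that min[OF that]] B by blast
      qed
      then show "bij_betw min_row B {0..<n}"
        using \<phi> B min_row by (intro bij_betw_byWitness[where f' = \<phi>]) (auto simp: bij_betw_def)
    }
    {
      assume bij: "bij_betw min_row B {0..<n}"
      have "is_min_row i (inv_into B min_row i)" if "i < n" for i
        using min_row[of "inv_into B min_row i"] bij_betw_inv_into_right[OF bij]
          bij_betw_apply[OF bij_betw_inv_into[OF bij]] B that by fastforce
      then show "\<exists>\<phi>. bij_betw \<phi> {0..<n} B \<and> (\<forall>i<n. is_min_row i (\<phi> i))"
        using bij_betw_inv_into[OF bij] by blast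
    }
  qed
  finally show ?thesis .
qed

lemma tropical_basis_subset_columns: "tropical_basis n M q B \<Longrightarrow> B \<subseteq> columns"
  by (simp add: tropical_basis_iff)

lemma tropical_basis_all_blue: "tropical_basis n M q (all_blue n)"
  unfolding tropical_basis_iff all_blue_def
  by (auto simp: min_row_blue intro!: bij_betw_byWitness[where f' = "\<lambda>i. (i, Blue)"])

definition leaving :: "col set \<Rightarrow> col \<Rightarrow> col" where
  "leaving B \<gamma> = inv_into B min_row (min_row \<gamma>)"

definition pivot :: "col set \<Rightarrow> col \<Rightarrow> col set" where
  "pivot B \<gamma> = insert \<gamma> (B - {leaving B \<gamma>})"

lemma leaving:
  assumes "tropical_basis n M q B" and "\<gamma> \<in> columns"
  shows "leaving B \<gamma> \<in> B" and "min_row (leaving B \<gamma>) = min_row \<gamma>"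
proof -
  have "min_row \<gamma> \<in> min_row ` B"
    using assms min_row by (auto simp: tropical_basis_iff bij_betw_def)
  then show "leaving B \<gamma> \<in> B" and "min_row (leaving B \<gamma>) = min_row \<gamma>"
    unfolding leaving_def by (auto intro: inv_into_into f_inv_into_f)
qed

lemma leaving_eqI:
  "tropical_basis n M q B \<Longrightarrow> c \<in> B \<Longrightarrow> min_row c = min_row \<gamma> \<Longrightarrow> leaving B \<gamma> = c"
  unfolding leaving_def tropical_basis_iff bij_betw_def by (auto intro: inv_into_f_eq)

fun admissible :: "col set \<times> col \<Rightarrow> bool" where
  "admissible (B, \<gamma>) \<longleftrightarrow> tropical_basis n M q B \<and> \<gamma> \<in> columns \<and> \<gamma> \<notin> B"

lemma leaving_admissible:
  assumes "admissible (B, \<gamma>)"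
  shows "leaving B \<gamma> \<in> B" and "leaving B \<gamma> \<noteq> \<gamma>" and "min_row (leaving B \<gamma>) = min_row \<gamma>"
  using assms leaving[of B \<gamma>] by auto

lemma tropical_basis_pivot:
  assumes "admissible (B, \<gamma>)"
  shows "tropical_basis n M q (pivot B \<gamma>)"
  using assms leaving[of B \<gamma>] bij_betw_exchange[of min_row B "{0..<n}" "leaving B \<gamma>" \<gamma>]
  by (auto simp: tropical_basis_iff pivot_def)

lemma tropical_basis_subset_eq:
  assumes "tropical_basis n M q B" and "tropical_basis n M q C" and "C \<subseteq> B"
  shows "C = B"
proof -
  have "inj_on min_row B" and "min_row ` C = min_row ` B"
    using assms(1,2) by (auto simp: tropical_basis_iff bij_betw_def)
  then show ?thesis
    using inj_on_image_eq_iff assms(3) by blast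
qed

lemma pivot_unique:
  assumes "admissible (B, \<gamma>)" and "tropical_basis n M q C" and "C \<subseteq> insert \<gamma> B" and "C \<noteq> B"
  shows "C = pivot B \<gamma>"
proof -
  let ?e = "leaving B \<gamma>"
  have "\<gamma> \<in> C"
    using assms tropical_basis_subset_eq[of B C] by auto
  moreover have "?e \<notin> C"
  proof
    assume "?e \<in> C"
    moreover have "inj_on min_row C"
      using assms(2) by (simp add: tropical_basis_iff bij_betw_def)
    ultimately have "?e = \<gamma>"
      using \<open>\<gamma> \<in> C\<close> leaving(2)[of B \<gamma>] assms(1) by (auto dest: inj_onD)
    then show False
      using leaving(1)[of B \<gamma>] assms(1) by auto
  qed
  ultimately have "C \<subseteq> pivot B \<gamma>"
    using assms(3) unfolding pivot_def by blast
  then show ?thesis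
    using tropical_basis_subset_eq tropical_basis_pivot assms(1,2) by blast
qed

fun reverse_pivot :: "col set \<times> col \<Rightarrow> col set \<times> col" where
  "reverse_pivot (B, \<gamma>) = (pivot B \<gamma>, leaving B \<gamma>)"

fun twin_entering :: "col set \<times> col \<Rightarrow> col set \<times> col" where
  "twin_entering (B, \<gamma>) = (B, twin \<gamma>)"

lemma twin_entering_twin_entering: "twin_entering (twin_entering s) = s"
  by (cases s) simp

lemma twin_entering_neq: "twin_entering s \<noteq> s"
  by (cases s) simp

definition lh_next :: "col set \<times> col \<Rightarrow> col set \<times> col" where
  "lh_next s = twin_entering (reverse_pivot s)"

lemma lh_next_pair [simp]: "lh_next (B, \<gamma>) = (pivot B \<gamma>, twin (leaving B \<gamma>))"
  by (simp add: lh_next_def)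

lemma tropical_basis_lh_next: "admissible s \<Longrightarrow> tropical_basis n M q (fst (lh_next s))"
  using tropical_basis_pivot by (metis fst_conv lh_next_pair prod.exhaust)

lemma lh_step_lh_next:
  assumes "admissible s"
  shows "lh_step n M q s (lh_next s)"
proof -
  obtain B \<gamma> where s: "s = (B, \<gamma>)"
    by (rule prod.exhaust)
  from assms have adm: "admissible (B, \<gamma>)"
    unfolding s .
  note e = leaving_admissible[OF adm]
  have pivot: "tropical_basis n M q (pivot B \<gamma>) \<and> pivot B \<gamma> \<subseteq> insert \<gamma> B \<and> pivot B \<gamma> \<noteq> B"
    using tropical_basis_pivot[OF adm] adm unfolding pivot_def by auto
  then have "\<exists>!C. tropical_basis n M q C \<and> C \<subseteq> insert \<gamma> B \<and> C \<noteq> B"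
    using pivot_unique[OF adm] by (intro ex1I[of _ "pivot B \<gamma>"]) auto
  moreover have "B - pivot B \<gamma> = {leaving B \<gamma>}"
    using e(1,2) unfolding pivot_def by auto
  ultimately show ?thesis
    using pivot unfolding lh_step_def s Let_def by simp
qed

lemma admissible_reverse_pivot:
  assumes "admissible s"
  shows "admissible (reverse_pivot s)"
proof -
  obtain B \<gamma> where s: "s = (B, \<gamma>)"
    by (rule prod.exhaust)
  from assms have adm: "admissible (B, \<gamma>)"
    unfolding s .
  note e = leaving_admissible[OF adm]
  have "leaving B \<gamma> \<in> columns"
    using e(1) adm tropical_basis_subset_columns by auto
  moreover have "leaving B \<gamma> \<notin> pivot B \<gamma>"
    using e(2) unfolding pivot_def by blast
  ultimately show ?thesis
    using tropical_basis_pivot[OF adm] unfolding s by simp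
qed

lemma reverse_pivot_reverse_pivot:
  assumes "admissible s"
  shows "reverse_pivot (reverse_pivot s) = s"
proof -
  obtain B \<gamma> where s: "s = (B, \<gamma>)"
    by (rule prod.exhaust)
  from assms have adm: "admissible (B, \<gamma>)"
    unfolding s .
  let ?e = "leaving B \<gamma>"
  note e = leaving_admissible[OF adm]
  have "leaving (pivot B \<gamma>) ?e = \<gamma>"
    using tropical_basis_pivot[OF adm] e(3) by (intro leaving_eqI) (auto simp: pivot_def)
  moreover have "pivot (pivot B \<gamma>) ?e = B"
    using calculation adm e(1,2) unfolding pivot_def by auto
  ultimately show ?thesis
    unfolding s by simp
qed

lemma reverse_pivot_neq:
  assumes "admissible s"
  shows "reverse_pivot s \<noteq> s"
proof -
  obtain B \<gamma> where s: "s = (B, \<gamma>)"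
    by (rule prod.exhaust)
  from assms have "\<gamma> \<notin> B"
    unfolding s by simp
  moreover have "\<gamma> \<in> pivot B \<gamma>"
    unfolding pivot_def by blast
  ultimately show ?thesis
    unfolding s by auto
qed

lemma inj_on_lh_next: "inj_on lh_next {s. admissible s}"
proof (rule inj_onI)
  fix s s' assume "s \<in> {s. admissible s}" "s' \<in> {s. admissible s}" "lh_next s = lh_next s'"
  then have "reverse_pivot (reverse_pivot s) = reverse_pivot (reverse_pivot s')"
    unfolding lh_next_def by (metis twin_entering_twin_entering)
  then show "s = s'"
    using \<open>s \<in> _\<close> \<open>s' \<in> _\<close> reverse_pivot_reverse_pivot by simp
qed

lemma finite_admissible: "finite {s. admissible s}"
proof (rule finite_subset)
  show "{s. admissible s} \<subseteq> Pow columns \<times> columns"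
  proof
    fix s assume "s \<in> {s. admissible s}"
    moreover obtain B \<gamma> where s: "s = (B, \<gamma>)"
      by (rule prod.exhaust)
    ultimately show "s \<in> Pow columns \<times> columns"
      using tropical_basis_subset_columns by simp
  qed
  show "finite (Pow columns \<times> columns)"
    by (simp add: finite_columns)
qed

(* The columns of B and gamma carry every label once, except j, which is carried by (j, Red)
   and by one more column.  The run stops when the leaving column has label j. *)
fun lh_invariant :: "nat \<Rightarrow> col set \<times> col \<Rightarrow> bool" where
  "lh_invariant j (B, \<gamma>) \<longleftrightarrow> admissible (B, \<gamma>) \<and> (j, Red) \<in> insert \<gamma> B \<and>
     bij_betw label (insert \<gamma> B - {(j, Red)}) {0..<n}"

lemma lh_invariant_admissible: "lh_invariant j s \<Longrightarrow> admissible s"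
  by (cases s) simp

lemma lh_invariant_start:
  assumes "j < n"
  shows "lh_invariant j (all_blue n, (j, Red))"
proof -
  have "insert (j, Red) (all_blue n) - {(j, Red)} = {0..<n} \<times> {Blue}"
    by (auto simp: all_blue_def)
  moreover have "bij_betw label ({0..<n} \<times> {Blue}) {0..<n}"
    by (auto intro!: bij_betw_byWitness[where f' = "\<lambda>i. (i, Blue)"])
  ultimately show ?thesis
    using assms tropical_basis_all_blue by (auto simp: all_blue_def)
qed

lemma not_fully_labeled_if_lh_invariant:
  assumes "lh_invariant j s" and "label (snd s) \<noteq> j"
  shows "\<not> fully_labeled n (fst s)"
proof
  obtain B \<gamma> where s: "s = (B, \<gamma>)"
    by (rule prod.exhaust)
  let ?S = "insert \<gamma> B - {(j, Red)}"
  have adm: "admissible (B, \<gamma>)" and inj: "inj_on label ?S" and "label \<gamma> \<noteq> j"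
    using assms unfolding s by (auto simp: bij_betw_def)
  assume "fully_labeled n (fst s)"
  moreover have "label \<gamma> < n"
    using adm label_less_if_mem_columns by simp
  ultimately obtain x where "x \<in> B" and "label x = label \<gamma>"
    unfolding fully_labeled_def s by fastforce
  moreover have "x \<noteq> (j, Red)" and "\<gamma> \<noteq> (j, Red)"
    using \<open>label \<gamma> \<noteq> j\<close> calculation by auto
  ultimately have "x = \<gamma>"
    using inj by (auto dest: inj_onD)
  then show False
    using adm \<open>x \<in> B\<close> by simp
qed

lemma lh_invariant_lh_next:
  assumes "lh_invariant j s" and "label (snd (lh_next s)) \<noteq> j"
  shows "lh_invariant j (lh_next s)"
proof -
  obtain B \<gamma> where s: "s = (B, \<gamma>)"
    by (rule prod.exhaust)
  let ?e = "leaving B \<gamma>" and ?S = "insert \<gamma> B - {(j, Red)}"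
  have adm: "admissible (B, \<gamma>)" and bij: "bij_betw label ?S {0..<n}" and "(j, Red) \<in> insert \<gamma> B"
    using assms unfolding s by auto
  note e = leaving_admissible[OF adm]
  have "label ?e \<noteq> j"
    using assms(2) unfolding s by simp
  then have "?e \<noteq> (j, Red)" and twin_red: "twin ?e \<noteq> (j, Red)"
    by (metis label_pair, metis label_pair label_twin)
  then have "?e \<in> ?S"
    using e by blast
  have "twin ?e \<notin> ?S"
  proof
    assume "twin ?e \<in> ?S"
    then have "twin ?e = ?e"
      using inj_onD[OF bij_betw_imp_inj_on[OF bij]] \<open>?e \<in> ?S\<close> label_twin by blast
    then show False
      by simp
  qed
  then have "twin ?e \<notin> pivot B \<gamma>"
    using twin_red unfolding pivot_def by blast
  moreover have "?e \<in> columns"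
    using e(1) adm tropical_basis_subset_columns by auto
  then have "twin ?e \<in> columns"
    by (cases ?e rule: twin.cases) auto
  moreover have "(j, Red) \<in> insert (twin ?e) (pivot B \<gamma>)"
    using \<open>(j, Red) \<in> insert \<gamma> B\<close> \<open>?e \<noteq> (j, Red)\<close> unfolding pivot_def by auto
  moreover have "insert (twin ?e) (pivot B \<gamma>) - {(j, Red)} = insert (twin ?e) (?S - {?e})"
    using e(2) twin_red unfolding pivot_def by auto
  moreover have "bij_betw label (insert (twin ?e) (?S - {?e})) {0..<n}"
    using bij \<open>?e \<in> ?S\<close> by (intro bij_betw_exchange) simp_all
  ultimately show ?thesis
    using tropical_basis_pivot[OF adm] unfolding s by simp
qed

lemma fully_labeled_lh_next:
  assumes "lh_invariant j s" and "label (snd (lh_next s)) = j"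
  shows "fully_labeled n (fst (lh_next s))"
  unfolding fully_labeled_def
proof
  obtain B \<gamma> where s: "s = (B, \<gamma>)"
    by (rule prod.exhaust)
  let ?e = "leaving B \<gamma>" and ?S = "insert \<gamma> B - {(j, Red)}"
  have adm: "admissible (B, \<gamma>)" and bij: "bij_betw label ?S {0..<n}" and "(j, Red) \<in> insert \<gamma> B"
    using assms unfolding s by auto
  have "?e \<noteq> \<gamma>" and "label ?e = j"
    using leaving_admissible[OF adm] assms(2) unfolding s by auto
  fix k assume "k \<in> {0..<n}"
  then obtain x where x: "x \<in> ?S" "label x = k"
    using bij unfolding bij_betw_def by (metis imageE)
  then have "x \<in> pivot B \<gamma> \<or> (x = ?e \<and> (j, Red) \<in> pivot B \<gamma>)"
    using \<open>?e \<noteq> \<gamma>\<close> \<open>(j, Red) \<in> insert \<gamma> B\<close> unfolding pivot_def by auto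
  then show "k \<in> label ` fst (lh_next s)"
    unfolding s lh_next_pair fst_conv using x \<open>label ?e = j\<close> by (metis image_eqI label_pair)
qed

definition lh_run :: "nat \<Rightarrow> nat \<Rightarrow> col set \<times> col" where
  "lh_run j t = (lh_next ^^ t) (all_blue n, (j, Red))"

lemma lh_run_0: "lh_run j 0 = (all_blue n, (j, Red))"
  by (simp add: lh_run_def)

lemma lh_run_Suc: "lh_run j (Suc t) = lh_next (lh_run j t)"
  by (simp add: lh_run_def)

lemma lh_run_stops:
  assumes "j < n"
  shows "\<exists>t>0. \<not> (lh_invariant j (lh_run j t) \<and> label (snd (lh_run j t)) \<noteq> j)"
proof (rule ccontr)
  assume "\<not> ?thesis"
  then have running: "lh_invariant j (lh_run j t)" "label (snd (lh_run j t)) \<noteq> j" if "t > 0" for t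
    using that by blast+
  have "admissible (lh_run j t)" for t
  proof (cases "t = 0")
    case True
    then show ?thesis
      using lh_invariant_admissible[OF lh_invariant_start[OF assms]] by (simp add: lh_run_0)
  next
    case False
    then show ?thesis
      using lh_invariant_admissible[OF running(1)] by simp
  qed
  then have orbit: "(lh_next ^^ t) (all_blue n, (j, Red)) \<in> {s. admissible s}" for t
    unfolding lh_run_def by simp
  obtain t where "t > 0" and "(lh_next ^^ t) (all_blue n, (j, Red)) = (all_blue n, (j, Red))"
    by (rule funpow_inj_on_finite_returns[OF finite_admissible inj_on_lh_next orbit])
  then show False
    using running(2)[of t] unfolding lh_run_def by simp
qed

lemma lh_run_not_back_to_all_blue:
  assumes adm: "\<And>t. t \<le> p \<Longrightarrow> admissible (lh_run j t)"
    and "label (snd (lh_run j (Suc p))) = j"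
  shows "fst (lh_run j (Suc p)) \<noteq> all_blue n"
proof
  assume returned: "fst (lh_run j (Suc p)) = all_blue n"
  obtain B \<gamma> where sp: "lh_run j p = (B, \<gamma>)"
    by (rule prod.exhaust)
  let ?e = "leaving B \<gamma>"
  have rev: "reverse_pivot (lh_run j p) = (all_blue n, ?e)"
    using returned sp by (simp add: lh_run_Suc)
  then have "admissible (all_blue n, ?e)"
    using admissible_reverse_pivot[OF adm[of p]] by simp
  then have "?e \<notin> all_blue n" and "?e \<in> columns"
    by simp_all
  moreover have "label ?e = j"
    using assms(2) sp by (simp add: lh_run_Suc)
  ultimately have "?e = (j, Red)"
    by (cases ?e rule: twin.cases) (auto simp: all_blue_def)
  then have "reverse_pivot (lh_run j p) = lh_run j 0"
    using rev by (simp add: lh_run_0)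
  moreover have "reverse_pivot (lh_run j p) \<noteq> lh_run j 0"
  proof (rule reversible_walk_not_closed[where V = "{s. admissible s}"])
    show "lh_run j (Suc t) = twin_entering (reverse_pivot (lh_run j t))" for t
      by (simp add: lh_run_Suc lh_next_def)
  qed (simp_all add: adm reverse_pivot_reverse_pivot reverse_pivot_neq
      twin_entering_twin_entering twin_entering_neq)
  ultimately show False
    by simp
qed

end

theorem proposition5p1:
  fixes n :: nat and M :: "nat \<Rightarrow> nat \<Rightarrow> ereal" and q :: "nat \<Rightarrow> real" and jstar :: nat
  assumes "tnecp_instance n M q"
    and "nondegenerate n M q"
    and "jstar < n"
  shows "\<exists>(N::nat) (s :: nat \<Rightarrow> col set \<times> col).
           0 < N \<and>
           s 0 = (all_blue n, (jstar, Red)) \<and>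
           (\<forall>t<N. lh_step n M q (s t) (s (Suc t))) \<and>
           (\<forall>t. 0 < t \<and> t < N \<longrightarrow> \<not> fully_labeled n (fst (s t))) \<and>
           fully_labeled n (fst (s N)) \<and>
           tropical_basis n M q (fst (s N)) \<and>
           fst (s N) \<noteq> all_blue n"
proof -
  interpret tnecp n M q
    using assms(1,2) by unfold_locales
  let ?s = "lh_run jstar"
  obtain N where "0 < N" and stop: "\<not> (lh_invariant jstar (?s N) \<and> label (snd (?s N)) \<noteq> jstar)"
    and running: "\<And>t. 0 < t \<Longrightarrow> t < N \<Longrightarrow> lh_invariant jstar (?s t) \<and> label (snd (?s t)) \<noteq> jstar"
    using exists_least_iff[THEN iffD1, OF lh_run_stops[OF assms(3)]] by blast
  then obtain p where N: "N = Suc p"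
    using gr0_implies_Suc by blast
  have invariant: "lh_invariant jstar (?s t)" if "t < N" for t
    using running[OF _ that] lh_invariant_start[OF assms(3)]
    by (cases "t = 0") (simp_all add: lh_run_0 del: lh_invariant.simps)
  then have admissible: "admissible (?s t)" if "t < N" for t
    using that lh_invariant_admissible by blast
  have "label (snd (?s N)) = jstar"
    using stop lh_invariant_lh_next[OF invariant] unfolding N lh_run_Suc by blast
  then have "fully_labeled n (fst (?s N))" and "fst (?s N) \<noteq> all_blue n"
    using fully_labeled_lh_next[OF invariant] lh_run_not_back_to_all_blue[of p jstar] admissible
    unfolding N lh_run_Suc by auto
  moreover have "tropical_basis n M q (fst (?s N))"
    using tropical_basis_lh_next[OF admissible] unfolding N lh_run_Suc by simp
  moreover have "\<forall>t<N. lh_step n M q (?s t) (?s (Suc t))"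
    using lh_step_lh_next admissible by (simp add: lh_run_Suc)
  moreover have "\<forall>t. 0 < t \<and> t < N \<longrightarrow> \<not> fully_labeled n (fst (?s t))"
    using running not_fully_labeled_if_lh_invariant by blast
  ultimately show ?thesis
    using \<open>0 < N\<close> by (intro exI[of _ N] exI[of _ ?s]) (simp add: lh_run_0)
qed

end
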